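(* Let $G$ be an almost hypohamiltonian graph with exceptional vertex $w$, and let $M$ be a $3$-edge-cut in $G$ (a set of three edges whose removal disconnects $G$). Then $G - M$ has exactly two components $A_1$ and $A_2$, with $A_1 \cong K_1$ and $A_2 \not\cong K_1$. In particular, almost hypohamiltonian graphs are cyclically $4$-edge-connected.
   Context: All graphs are finite, undirected, connected, without loops or multiple edges. A graph is hamiltonian if it has a cycle through all its vertices. A non-hamiltonian graph $G$ is almost hypohamiltonian if there exists a vertex $w$ (the exceptional vertex) such that $G - w$ is non-hamiltonian and $G - v$ is hamiltonian for every vertex $v \neq w$. A graph is cyclically $4$-edge-connected if no edge set of size less than $4$ separates it into two components each containing a cycle. *)

theory Defs
  imports Main
begin

definition simple_graph :: "'a set \<Rightarrow> 'a set set \<Rightarrow> bool" where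
  "simple_graph V E \<longleftrightarrow> finite V \<and>
     (\<forall>e\<in>E. \<exists>u v. e = {u, v} \<and> u \<noteq> v \<and> u \<in> V \<and> v \<in> V)"

definition reachable :: "'a set \<Rightarrow> 'a set set \<Rightarrow> 'a \<Rightarrow> 'a \<Rightarrow> bool" where
  "reachable V E u v \<longleftrightarrow> u \<in> V \<and> v \<in> V \<and>
     (u, v) \<in> {(x, y). x \<in> V \<and> y \<in> V \<and> {x, y} \<in> E}\<^sup>*"

definition connected_graph :: "'a set \<Rightarrow> 'a set set \<Rightarrow> bool" where
  "connected_graph V E \<longleftrightarrow> V \<noteq> {} \<and> (\<forall>u\<in>V. \<forall>v\<in>V. reachable V E u v)"

definition components :: "'a set \<Rightarrow> 'a set set \<Rightarrow> 'a set set" where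
  "components V E = {{v. reachable V E u v} | u. u \<in> V}"

definition is_cycle :: "'a set set \<Rightarrow> 'a list \<Rightarrow> bool" where
  "is_cycle E vs \<longleftrightarrow> length vs \<ge> 3 \<and> distinct vs \<and>
     (\<forall>i < length vs. {vs ! i, vs ! ((i + 1) mod length vs)} \<in> E)"

definition hamiltonian :: "'a set \<Rightarrow> 'a set set \<Rightarrow> bool" where
  "hamiltonian V E \<longleftrightarrow> (\<exists>vs. is_cycle E vs \<and> set vs = V)"

definition del_vertex_V :: "'a set \<Rightarrow> 'a \<Rightarrow> 'a set" where
  "del_vertex_V V v = V - {v}"

definition del_vertex_E :: "'a set set \<Rightarrow> 'a \<Rightarrow> 'a set set" where
  "del_vertex_E E v = {e \<in> E. v \<notin> e}"

definition almost_hypohamiltonian :: "'a set \<Rightarrow> 'a set set \<Rightarrow> 'a \<Rightarrow> bool" where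
  "almost_hypohamiltonian V E w \<longleftrightarrow>
     simple_graph V E \<and> connected_graph V E \<and> \<not> hamiltonian V E \<and> w \<in> V \<and>
     \<not> hamiltonian (del_vertex_V V w) (del_vertex_E E w) \<and>
     (\<forall>v\<in>V. v \<noteq> w \<longrightarrow> hamiltonian (del_vertex_V V v) (del_vertex_E E v))"

definition contains_cycle :: "'a set \<Rightarrow> 'a set set \<Rightarrow> bool" where
  "contains_cycle C E \<longleftrightarrow> (\<exists>vs. is_cycle E vs \<and> set vs \<subseteq> C)"

definition cyclically_4_edge_connected :: "'a set \<Rightarrow> 'a set set \<Rightarrow> bool" where
  "cyclically_4_edge_connected V E \<longleftrightarrow>
     (\<forall>F \<subseteq> E. card F < 4 \<longrightarrow>
        \<not> (\<exists>C1 C2. components V (E - F) = {C1, C2} \<and> C1 \<noteq> C2 \<and>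
                   contains_cycle C1 (E - F) \<and> contains_cycle C2 (E - F)))"

end

theory Submission
  imports Defs
begin

(* Let (A, B) be a partition of the vertices of an almost hypohamiltonian graph G with
   |A|, |B| >= 2 and at most three edges between A and B, where w is not in B. For y in A - {w},
   a hamiltonian cycle of G - y crosses the cut an even, positive number of times, hence exactly
   twice, so it splits into a hamiltonian path of A - y and one of B joined by two cut edges.
   Choose x in B on the remaining cut edge (if any). The hamiltonian cycle of G - x then uses the
   same two cut edges, so its path through A ends at the same two cut edges as the path through B
   found before, and the two paths close up to a hamiltonian cycle of G: a contradiction.
   Hence a cut with at most three edges isolates a single vertex. Since all degrees are at least
   3, a 3-edge-cut consists of the edges at that vertex, which rules out a third component, and
   two components containing cycles cannot be separated by fewer than four edges. *)

fun walk :: "'a set set \<Rightarrow> 'a list \<Rightarrow> bool" where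
  "walk E (x # y # xs) \<longleftrightarrow> {x, y} \<in> E \<and> walk E (y # xs)"
| "walk E _ \<longleftrightarrow> True"

lemma walk_iff_nth: "walk E xs \<longleftrightarrow> (\<forall>i. Suc i < length xs \<longrightarrow> {xs ! i, xs ! Suc i} \<in> E)"
proof (induction E xs rule: walk.induct)
  case (1 E x y xs)
  then show ?case by (auto simp: nth_Cons All_less_Suc2 split: nat.splits)
qed (auto simp: less_Suc_eq_0_disj)

lemma walk_append:
  "walk E (xs @ ys) \<longleftrightarrow> walk E xs \<and> walk E ys \<and> (xs \<noteq> [] \<and> ys \<noteq> [] \<longrightarrow> {last xs, hd ys} \<in> E)"
proof (induction xs)
  case (Cons x xs)
  then show ?case by (cases xs; cases ys) auto
qed simp

lemma walk_rev: "walk E (rev xs) \<longleftrightarrow> walk E xs"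
proof (induction xs)
  case (Cons x xs)
  then show ?case by (cases xs) (auto simp: walk_append insert_commute)
qed simp

lemma walk_mono: "walk E xs \<Longrightarrow> E \<subseteq> E' \<Longrightarrow> walk E' xs"
  by (induction E xs rule: walk.induct) auto

lemma is_cycle_iff_walk:
  "is_cycle E vs \<longleftrightarrow> 3 \<le> length vs \<and> distinct vs \<and> walk E vs \<and> {last vs, hd vs} \<in> E"
proof (cases "vs = []")
  case False
  then obtain m where m: "length vs = Suc m" by (cases vs) auto
  have "(\<forall>i < Suc m. {vs ! i, vs ! ((i + 1) mod Suc m)} \<in> E) \<longleftrightarrow>
        (\<forall>i. Suc i < Suc m \<longrightarrow> {vs ! i, vs ! Suc i} \<in> E) \<and> {vs ! m, vs ! 0} \<in> E"
    by (auto simp: less_Suc_eq mod_Suc) (metis Suc_lessI)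
  then show ?thesis
    using False m by (simp add: is_cycle_def walk_iff_nth last_conv_nth hd_conv_nth)
qed (simp add: is_cycle_def)

fun colour_changes :: "('a \<Rightarrow> bool) \<Rightarrow> 'a list \<Rightarrow> 'a set set" where
  "colour_changes s (x # y # xs) =
     (if s x = s y then {} else {{x, y}}) \<union> colour_changes s (y # xs)"
| "colour_changes s _ = {}"

lemma finite_colour_changes [simp]: "finite (colour_changes s xs)"
  by (induction s xs rule: colour_changes.induct) auto

lemma colour_changes_in_walk: "walk E xs \<Longrightarrow> colour_changes s xs \<subseteq> E"
  by (induction s xs rule: colour_changes.induct) auto

lemma colour_changes_consecutive:
  "e \<in> colour_changes s xs \<Longrightarrow> \<exists>ys a b zs. xs = ys @ a # b # zs \<and> e = {a, b} \<and> s a \<noteq> s b"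
proof (induction s xs rule: colour_changes.induct)
  case (1 s x y xs)
  show ?case
  proof (cases "e \<in> colour_changes s (y # xs)")
    case True
    then obtain ys a b zs where "y # xs = ys @ a # b # zs" "e = {a, b}" "s a \<noteq> s b"
      using "1.IH" by blast
    then show ?thesis by (intro exI[of _ "x # ys"]) auto
  next
    case False
    then show ?thesis using "1.prems" by (intro exI[of _ "[]"]) (auto split: if_splits)
  qed
qed auto

lemma colour_changes_subset: "e \<in> colour_changes s xs \<Longrightarrow> e \<subseteq> set xs"
  by (auto dest!: colour_changes_consecutive)

lemma colour_changes_bichromatic:
  assumes "e \<in> colour_changes s xs"
  obtains a b where "e = {a, b}" "a \<in> set xs" "b \<in> set xs" "s a" "\<not> s b"
proof -
  obtain ys a b zs where "xs = ys @ a # b # zs" "e = {a, b}" "s a \<noteq> s b"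
    using colour_changes_consecutive[OF assms] by blast
  then show thesis
    by (cases "s a") (auto intro: that simp: insert_commute)
qed

lemma colour_changes_append:
  "colour_changes s (xs @ ys) = colour_changes s xs \<union> colour_changes s ys \<union>
     (if xs \<noteq> [] \<and> ys \<noteq> [] \<and> s (last xs) \<noteq> s (hd ys) then {{last xs, hd ys}} else {})"
proof (induction xs)
  case (Cons x xs)
  then show ?case by (cases xs; cases ys) auto
qed simp

lemma colour_changes_empty_iff: "colour_changes s xs = {} \<longleftrightarrow> (\<forall>z\<in>set xs. s z = s (hd xs))"
  by (induction s xs rule: colour_changes.induct) auto

lemma even_card_colour_changes_iff:
  "distinct xs \<Longrightarrow> xs \<noteq> [] \<Longrightarrow> even (card (colour_changes s xs)) \<longleftrightarrow> s (last xs) = s (hd xs)"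
proof (induction s xs rule: colour_changes.induct)
  case (1 s x y xs)
  have "{x, y} \<notin> colour_changes s (y # xs)"
    using "1.prems"(1) colour_changes_subset by fastforce
  with 1 show ?case by auto
qed auto

lemma closing_edge_notin_colour_changes:
  assumes "distinct xs" "3 \<le> length xs"
  shows "{last xs, hd xs} \<notin> colour_changes s xs"
proof
  assume "{last xs, hd xs} \<in> colour_changes s xs"
  then obtain ys a b zs where xs: "xs = ys @ a # b # zs" and ab: "{last xs, hd xs} = {a, b}"
    using colour_changes_consecutive by blast
  have "ys = []"
  proof (rule ccontr)
    assume "ys \<noteq> []"
    then have "hd xs \<in> set ys" using xs by simp
    moreover have "hd xs \<in> {a, b}" using ab by blast
    moreover have "a \<notin> set ys" "b \<notin> set ys" using assms(1) unfolding xs by auto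
    ultimately show False by blast
  qed
  moreover have "zs = []"
  proof (rule ccontr)
    assume "zs \<noteq> []"
    then have "last xs \<in> set zs" using xs by simp
    moreover have "last xs \<in> {a, b}" using ab by blast
    moreover have "a \<notin> set zs" "b \<notin> set zs" using assms(1) unfolding xs by auto
    ultimately show False by blast
  qed
  ultimately show False using xs assms(2) by simp
qed

lemma split_at_first_colour_change:
  assumes "colour_changes s xs \<noteq> {}"
  obtains p r where "xs = p @ r" "p \<noteq> []" "r \<noteq> []" "\<forall>z\<in>set p. s z = s (hd xs)"
    "s (hd r) \<noteq> s (hd xs)" "colour_changes s xs = insert {last p, hd r} (colour_changes s r)"
proof -
  define p where "p = takeWhile (\<lambda>z. s z = s (hd xs)) xs"
  define r where "r = dropWhile (\<lambda>z. s z = s (hd xs)) xs"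
  have xs: "xs = p @ r" by (simp add: p_def r_def)
  have "xs \<noteq> []" using assms by auto
  then have p: "p \<noteq> []" by (cases xs) (auto simp: p_def)
  have r: "r \<noteq> []"
    using assms by (auto simp: r_def colour_changes_empty_iff)
  have p_colour: "\<forall>z\<in>set p. s z = s (hd xs)"
    by (auto simp: p_def dest: set_takeWhileD)
  have r_colour: "s (hd r) \<noteq> s (hd xs)"
    using r hd_dropWhile[of "\<lambda>z. s z = s (hd xs)" xs] by (simp add: r_def)
  have hd_p: "hd p = hd xs" using p by (simp add: xs)
  have "colour_changes s p = {}" using p_colour by (simp add: colour_changes_empty_iff hd_p)
  moreover have "s (last p) \<noteq> s (hd r)" using p p_colour r_colour by simp
  ultimately have "colour_changes s (p @ r) = insert {last p, hd r} (colour_changes s r)"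
    using p r by (simp add: colour_changes_append)
  then have "colour_changes s xs = insert {last p, hd r} (colour_changes s r)"
    by (simp only: xs)
  with xs p r p_colour r_colour show thesis by (rule that)
qed

lemma edge_at_split_notin_colour_changes:
  assumes "distinct (p @ r)" "p \<noteq> []"
  shows "{last p, hd r} \<notin> colour_changes s r"
proof
  assume "{last p, hd r} \<in> colour_changes s r"
  then have "last p \<in> set r" using colour_changes_subset by blast
  moreover have "last p \<in> set p" using assms(2) by simp
  ultimately show False using assms(1) by auto
qed

lemma split_at_only_colour_change:
  assumes "distinct xs" "card (colour_changes s xs) = 1"
  obtains p q where "xs = p @ q" "p \<noteq> []" "q \<noteq> []" "\<forall>z\<in>set p. s z = s (hd xs)"
    "\<forall>z\<in>set q. s z \<noteq> s (hd xs)" "colour_changes s xs = {{last p, hd q}}"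
proof -
  have "colour_changes s xs \<noteq> {}" using assms(2) by auto
  then obtain p q where xs: "xs = p @ q" and pq: "p \<noteq> []" "q \<noteq> []"
    and p_colour: "\<forall>z\<in>set p. s z = s (hd xs)" and q_colour: "s (hd q) \<noteq> s (hd xs)"
    and changes: "colour_changes s xs = insert {last p, hd q} (colour_changes s q)"
    by (rule split_at_first_colour_change)
  have "distinct (p @ q)" using assms(1) by (simp only: xs)
  then have "{last p, hd q} \<notin> colour_changes s q"
    using pq(1) by (rule edge_at_split_notin_colour_changes)
  then have q_changes: "colour_changes s q = {}"
    using assms(2) changes by (simp add: card_insert_if)
  then have "\<forall>z\<in>set q. s z \<noteq> s (hd xs)"
    using q_colour by (simp add: colour_changes_empty_iff)
  moreover have "colour_changes s xs = {{last p, hd q}}"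
    using changes q_changes by simp
  ultimately show thesis using that[OF xs pq p_colour] by blast
qed

definition cycle_colour_changes :: "('a \<Rightarrow> bool) \<Rightarrow> 'a list \<Rightarrow> 'a set set" where
  "cycle_colour_changes s vs =
     colour_changes s vs \<union> (if s (last vs) = s (hd vs) then {} else {{last vs, hd vs}})"

lemma cycle_colour_changes_subset: "is_cycle E vs \<Longrightarrow> cycle_colour_changes s vs \<subseteq> E"
  by (auto simp: cycle_colour_changes_def is_cycle_iff_walk dest: colour_changes_in_walk)

lemma cycle_colour_changes_bichromatic:
  assumes "e \<in> cycle_colour_changes s vs" "vs \<noteq> []"
  obtains a b where "e = {a, b}" "a \<in> set vs" "b \<in> set vs" "s a" "\<not> s b"
proof -
  consider "e \<in> colour_changes s vs" | "e = {last vs, hd vs}" "s (last vs) \<noteq> s (hd vs)"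
    using assms(1) by (auto simp: cycle_colour_changes_def split: if_splits)
  then show thesis
  proof cases
    case 1
    then show ?thesis by (rule colour_changes_bichromatic) (rule that)
  next
    case 2
    moreover have "last vs \<in> set vs" "hd vs \<in> set vs" using assms(2) by simp_all
    ultimately show ?thesis
      using that by (cases "s (last vs)") (auto simp: insert_commute)
  qed
qed

lemma even_card_cycle_colour_changes:
  assumes "is_cycle E vs"
  shows "even (card (cycle_colour_changes s vs))"
proof -
  have "distinct vs" "vs \<noteq> []" "{last vs, hd vs} \<notin> colour_changes s vs"
    using assms closing_edge_notin_colour_changes by (auto simp: is_cycle_iff_walk)
  then show ?thesis
    by (simp add: cycle_colour_changes_def even_card_colour_changes_iff)
qed

lemma cycle_colour_changes_nonempty:
  assumes "x \<in> set vs" "y \<in> set vs" "s x \<noteq> s y"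
  shows "cycle_colour_changes s vs \<noteq> {}"
proof
  assume "cycle_colour_changes s vs = {}"
  then have "\<forall>z\<in>set vs. s z = s (hd vs)"
    by (simp add: cycle_colour_changes_def colour_changes_empty_iff)
  then show False using assms by metis
qed

lemma cycle_split_at_closing_colour_change:
  assumes cycle: "is_cycle E vs" and two: "card (cycle_colour_changes s vs) = 2"
    and closing_change: "s (last vs) \<noteq> s (hd vs)"
  obtains p q where "walk E p" "walk E q" "distinct p" "distinct q" "p \<noteq> []" "q \<noteq> []"
    "set p = {x\<in>set vs. s x = s (hd vs)}" "set q = {x\<in>set vs. s x \<noteq> s (hd vs)}"
    "cycle_colour_changes s vs = {{last p, hd q}, {last q, hd p}}"
proof -
  obtain c where c: "s (hd vs) = c" by blast
  have dist: "distinct vs" and walk: "walk E vs" and long: "3 \<le> length vs"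
    using cycle by (auto simp: is_cycle_iff_walk)
  from dist long have "{last vs, hd vs} \<notin> colour_changes s vs"
    by (rule closing_edge_notin_colour_changes)
  then have "card (colour_changes s vs) = 1"
    using two closing_change by (simp add: cycle_colour_changes_def)
  with dist obtain p q where vs: "vs = p @ q" and pq: "p \<noteq> []" "q \<noteq> []"
    and colours: "\<forall>z\<in>set p. s z = c" "\<forall>z\<in>set q. s z \<noteq> c"
    and changes: "colour_changes s vs = {{last p, hd q}}"
    by (rule split_at_only_colour_change[of vs s, unfolded c])
  have ends: "last vs = last q" "hd vs = hd p" using pq by (simp_all add: vs)
  have "cycle_colour_changes s vs = {{last p, hd q}, {last q, hd p}}"
    using closing_change changes by (simp add: cycle_colour_changes_def ends insert_commute)
  moreover have "walk E p" "walk E q" "distinct p" "distinct q"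
    using walk dist by (simp_all add: vs walk_append)
  moreover have "set p = {x\<in>set vs. s x = c}" "set q = {x\<in>set vs. s x \<noteq> c}"
    using colours by (auto simp: vs)
  ultimately show thesis using that pq unfolding c by blast
qed

lemma cycle_split_at_two_inner_colour_changes:
  assumes cycle: "is_cycle E vs" and two: "card (cycle_colour_changes s vs) = 2"
    and closing_same: "s (last vs) = s (hd vs)"
  obtains p q where "walk E p" "walk E q" "distinct p" "distinct q" "p \<noteq> []" "q \<noteq> []"
    "set p = {x\<in>set vs. s x = s (hd vs)}" "set q = {x\<in>set vs. s x \<noteq> s (hd vs)}"
    "cycle_colour_changes s vs = {{last p, hd q}, {last q, hd p}}"
proof -
  obtain c where c: "s (hd vs) = c" by blast
  have dist: "distinct vs" and walk: "walk E vs" and closing: "{last vs, hd vs} \<in> E"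
    using cycle by (auto simp: is_cycle_iff_walk)
  have "card (colour_changes s vs) = 2"
    using two closing_same by (simp add: cycle_colour_changes_def)
  then have "colour_changes s vs \<noteq> {}" by auto
  then obtain p r where vs: "vs = p @ r" and pr: "p \<noteq> []" "r \<noteq> []"
    and p_colour: "\<forall>z\<in>set p. s z = c" and r_colour: "s (hd r) \<noteq> c"
    and changes: "colour_changes s vs = insert {last p, hd r} (colour_changes s r)"
    by (rule split_at_first_colour_change[of s vs, unfolded c])
  have "distinct (p @ r)" using dist by (simp only: vs)
  then have "{last p, hd r} \<notin> colour_changes s r"
    using pr(1) by (rule edge_at_split_notin_colour_changes)
  then have r_card: "card (colour_changes s r) = 1"
    using \<open>card (colour_changes s vs) = 2\<close> changes by (simp add: card_insert_if)
  have "distinct r" using \<open>distinct (p @ r)\<close> by simp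
  from this r_card obtain q t where r: "r = q @ t" and qt: "q \<noteq> []" "t \<noteq> []"
    and q_colour: "\<forall>z\<in>set q. s z = s (hd r)" and t_colour: "\<forall>z\<in>set t. s z \<noteq> s (hd r)"
    and r_changes: "colour_changes s r = {{last q, hd t}}"
    by (rule split_at_only_colour_change)
  \<comment> \<open>vs = p @ q @ t with p and t of the colour of hd vs; the closing edge makes t @ p a path\<close>
  have hd_r: "hd r = hd q" using qt by (simp add: r)
  have ends: "last vs = last t" "hd vs = hd p" using pr qt by (simp_all add: vs r)
  have "cycle_colour_changes s vs = {{last p, hd q}, {last q, hd t}}"
    using closing_same changes r_changes hd_r by (simp add: cycle_colour_changes_def)
  moreover have "walk E (t @ p)" "walk E q" "distinct (t @ p)" "distinct q"
    using walk dist closing pr qt by (auto simp: vs r walk_append ends)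
  moreover have "set (t @ p) = {x\<in>set vs. s x = c}" "set q = {x\<in>set vs. s x \<noteq> c}"
    using p_colour q_colour t_colour r_colour by (auto simp: vs r hd_r)
  ultimately show thesis using that[of "t @ p" q] pr qt unfolding c by (simp add: hd_r)
qed

lemma cycle_split_at_two_colour_changes:
  assumes "is_cycle E vs" "card (cycle_colour_changes s vs) = 2"
  obtains p q where "walk E p" "walk E q" "distinct p" "distinct q" "p \<noteq> []" "q \<noteq> []"
    "set p = {x\<in>set vs. s x}" "set q = {x\<in>set vs. \<not> s x}"
    "cycle_colour_changes s vs = {{last p, hd q}, {last q, hd p}}"
proof -
  obtain p q where pq: "walk E p" "walk E q" "distinct p" "distinct q" "p \<noteq> []" "q \<noteq> []"
    and sets: "set p = {x\<in>set vs. s x = s (hd vs)}" "set q = {x\<in>set vs. s x \<noteq> s (hd vs)}"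
    and changes: "cycle_colour_changes s vs = {{last p, hd q}, {last q, hd p}}"
  proof (cases "s (last vs) = s (hd vs)")
    case True
    then show thesis by (rule cycle_split_at_two_inner_colour_changes[OF assms]) (rule that)
  next
    case False
    then show thesis by (rule cycle_split_at_closing_colour_change[OF assms]) (rule that)
  qed
  show thesis
  proof (cases "s (hd vs)")
    case True
    with pq sets changes show thesis by (intro that) auto
  next
    case False
    with pq sets changes show thesis by (intro that[of q p]) (auto simp: insert_commute)
  qed
qed

lemma distinct_hd_neq_last: "distinct xs \<Longrightarrow> 2 \<le> length xs \<Longrightarrow> hd xs \<noteq> last xs"
  by (cases xs) (auto dest: last_in_set)

lemma cycle_two_neighbours:
  assumes "is_cycle E vs" "u \<in> set vs"
  obtains a b where "a \<noteq> b" "{u, a} \<in> E" "{u, b} \<in> E"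
proof -
  obtain ys zs where vs: "vs = ys @ u # zs" using split_list[OF assms(2)] by blast
  have walk: "walk E (ys @ u # zs)" and dist: "distinct (ys @ u # zs)"
    and closing: "{last vs, hd vs} \<in> E" and long: "3 \<le> length (ys @ u # zs)"
    using assms(1) by (auto simp: is_cycle_iff_walk vs)
  have left: "{u, last ys} \<in> E" if "ys \<noteq> []"
    using walk that by (simp add: walk_append insert_commute)
  have right: "{u, hd zs} \<in> E" if "zs \<noteq> []"
    using walk that by (cases zs) (simp_all add: walk_append)
  consider "ys \<noteq> []" "zs \<noteq> []" | "ys = []" | "zs = []" by blast
  then show thesis
  proof cases
    case 1
    then have "last ys \<noteq> hd zs" using dist by (auto dest: last_in_set hd_in_set)
    with 1 show thesis using that left right by blast
  next
    case 2
    then have "zs \<noteq> []" "hd zs \<noteq> last zs" "{u, last zs} \<in> E"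
      using long dist closing by (auto simp: vs distinct_hd_neq_last insert_commute split: if_splits)
    with that right show thesis by blast
  next
    case 3
    then have "ys \<noteq> []" "last ys \<noteq> hd ys" "{u, hd ys} \<in> E"
      using long dist closing distinct_hd_neq_last[of ys] by (auto simp: vs hd_append split: if_splits)
    with that left show thesis by blast
  qed
qed

lemma simple_graph_edge: "simple_graph V E \<Longrightarrow> {a, b} \<in> E \<Longrightarrow> a \<in> V \<and> b \<in> V \<and> a \<noteq> b"
  unfolding simple_graph_def by (metis doubleton_eq_iff)

lemma simple_graph_finite_edges:
  assumes "simple_graph V E"
  shows "finite E"
proof -
  have "E \<subseteq> Pow V" using assms by (auto simp: simple_graph_def)
  moreover have "finite V" using assms by (simp add: simple_graph_def)
  ultimately show ?thesis by (rule finite_subset[OF _ finite_Pow_iff[THEN iffD2]])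
qed

lemma components_eq_quotient: "components V E = V // {(u, v). reachable V E u v}"
  by (auto simp: components_def quotient_def)

lemma equiv_reachable: "equiv V {(u, v). reachable V E u v}"
proof (rule equivI)
  let ?R = "{(x, y). x \<in> V \<and> y \<in> V \<and> {x, y} \<in> E}"
  have "sym ?R" by (auto simp: sym_def insert_commute)
  then have "sym (?R\<^sup>*)" by (rule sym_rtrancl)
  then show "sym {(u, v). reachable V E u v}"
    by (auto simp: sym_def reachable_def)
  show "{(u, v). reachable V E u v} \<subseteq> V \<times> V"
    by (auto simp: reachable_def)
  show "refl_on V {(u, v). reachable V E u v}"
    by (auto simp: refl_on_def reachable_def)
  show "trans {(u, v). reachable V E u v}"
    by (auto simp: trans_def reachable_def)
qed

lemma component_in_components: "u \<in> V \<Longrightarrow> {v. reachable V E u v} \<in> components V E"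
  by (auto simp: components_def)

lemma components_subset: "K \<in> components V E \<Longrightarrow> K \<subseteq> V"
  using in_quotient_imp_subset[OF equiv_reachable] by (simp add: components_eq_quotient)

lemma components_nonempty: "K \<in> components V E \<Longrightarrow> K \<noteq> {}"
  using in_quotient_imp_non_empty[OF equiv_reachable] by (simp add: components_eq_quotient)

lemma components_disjoint:
  "K \<in> components V E \<Longrightarrow> K' \<in> components V E \<Longrightarrow> K \<noteq> K' \<Longrightarrow> K \<inter> K' = {}"
  using quotient_disj[OF equiv_reachable] by (simp add: components_eq_quotient) blast

lemma Union_components: "\<Union> (components V E) = V"
  using Union_quotient[OF equiv_reachable] by (simp add: components_eq_quotient)

lemma component_closed:
  assumes "K \<in> components V E" "a \<in> K" "{a, b} \<in> E" "b \<in> V"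
  shows "b \<in> K"
proof -
  obtain u where K: "K = {v. reachable V E u v}" using assms(1) by (auto simp: components_def)
  with assms(2) have "reachable V E u a" by simp
  with assms(3,4) have "reachable V E u b"
    by (auto simp: reachable_def intro: rtrancl_into_rtrancl)
  with K show ?thesis by simp
qed

definition cut_edges :: "'a set set \<Rightarrow> 'a set \<Rightarrow> 'a set \<Rightarrow> 'a set set" where
  "cut_edges E A B = {e\<in>E. \<exists>a b. e = {a, b} \<and> a \<in> A \<and> b \<in> B}"

lemma cut_edges_subset: "cut_edges E A B \<subseteq> E"
  by (auto simp: cut_edges_def)

lemma cut_edges_commute: "cut_edges E A B = cut_edges E B A"
  unfolding cut_edges_def by (metis insert_commute)

lemma component_cut_edges_subset:
  assumes "K \<in> components V (E - F)"
  shows "cut_edges E K (V - K) \<subseteq> F"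
proof
  fix e assume "e \<in> cut_edges E K (V - K)"
  then obtain a b where e: "e \<in> E" "e = {a, b}" "a \<in> K" "b \<in> V - K"
    by (auto simp: cut_edges_def)
  show "e \<in> F"
  proof (rule ccontr)
    assume "e \<notin> F"
    with e have "b \<in> K" using component_closed[OF assms, of a b] by blast
    with e show False by simp
  qed
qed

lemma card_ge_3_if_contains_cycle:
  assumes "contains_cycle C E" "finite C"
  shows "3 \<le> card C"
proof -
  obtain vs where vs: "is_cycle E vs" "set vs \<subseteq> C"
    using assms(1) by (auto simp: contains_cycle_def)
  then have "3 \<le> card (set vs)" by (simp add: is_cycle_def distinct_card)
  also have "\<dots> \<le> card C" using vs(2) assms(2) by (rule card_mono[rotated])
  finally show ?thesis .
qed

lemma almost_hypohamiltonian_vertex_deleted: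
  assumes "almost_hypohamiltonian V E w" "v \<in> V" "v \<noteq> w"
  obtains vs where "is_cycle (del_vertex_E E v) vs" "set vs = V - {v}"
  using assms unfolding almost_hypohamiltonian_def hamiltonian_def del_vertex_V_def by blast

lemma almost_hypohamiltonian_card_ge_4:
  assumes ah: "almost_hypohamiltonian V E w" and "V \<noteq> {w}"
  shows "4 \<le> card V"
proof -
  have "w \<in> V" "finite V" using ah by (auto simp: almost_hypohamiltonian_def simple_graph_def)
  with assms(2) obtain v where v: "v \<in> V" "v \<noteq> w" by blast
  then obtain vs where vs: "is_cycle (del_vertex_E E v) vs" "set vs = V - {v}"
    by (rule almost_hypohamiltonian_vertex_deleted[OF ah])
  then have "distinct vs" "3 \<le> length vs" by (simp_all add: is_cycle_def)
  then have "3 \<le> card (V - {v})" by (simp flip: vs(2) add: distinct_card)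
  with v \<open>finite V\<close> show ?thesis by simp
qed

lemma almost_hypohamiltonian_neighbours_avoiding:
  assumes ah: "almost_hypohamiltonian V E w" and x: "x \<in> V" "x \<noteq> w" and u: "u \<in> V" "u \<noteq> x"
  obtains a b where "a \<noteq> b" "{u, a} \<in> E" "{u, b} \<in> E" "a \<noteq> x" "b \<noteq> x"
proof -
  obtain vs where vs: "is_cycle (del_vertex_E E x) vs" "set vs = V - {x}"
    using almost_hypohamiltonian_vertex_deleted[OF ah x] by blast
  with u obtain a b where "a \<noteq> b" "{u, a} \<in> del_vertex_E E x" "{u, b} \<in> del_vertex_E E x"
    by (auto elim: cycle_two_neighbours)
  then show thesis using that by (auto simp: del_vertex_E_def)
qed

lemma almost_hypohamiltonian_degree_ge_3:
  assumes ah: "almost_hypohamiltonian V E w" and "V \<noteq> {w}" and u: "u \<in> V"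
  shows "3 \<le> card {e\<in>E. u \<in> e}"
proof -
  have simple: "simple_graph V E" using ah by (simp add: almost_hypohamiltonian_def)
  have "\<not> V \<subseteq> {u, w}"
  proof
    assume "V \<subseteq> {u, w}"
    then have "card V \<le> card {u, w}" by (simp add: card_mono)
    also have "\<dots> \<le> 2" by (simp add: card_insert_if)
    finally show False using almost_hypohamiltonian_card_ge_4[OF ah assms(2)] by simp
  qed
  then obtain x where x: "x \<in> V" "x \<noteq> u" "x \<noteq> w" by blast
  obtain a b where "a \<noteq> b" "{u, a} \<in> E" "{u, b} \<in> E"
    using almost_hypohamiltonian_neighbours_avoiding[OF ah x(1,3) u] x(2) by metis
  then obtain a where a: "{u, a} \<in> E" "a \<noteq> w" by metis
  then have "a \<in> V" "a \<noteq> u" using simple_graph_edge[OF simple] by blast+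
  then obtain c d where cd: "c \<noteq> d" "{u, c} \<in> E" "{u, d} \<in> E" "c \<noteq> a" "d \<noteq> a"
    using almost_hypohamiltonian_neighbours_avoiding[OF ah _ a(2) u] by metis
  have "c \<noteq> u" "d \<noteq> u" using simple_graph_edge[OF simple] cd(2,3) by blast+
  with cd \<open>a \<noteq> u\<close> have "card {{u, a}, {u, c}, {u, d}} = 3"
    by (auto simp: doubleton_eq_iff)
  moreover have "{{u, a}, {u, c}, {u, d}} \<subseteq> {e\<in>E. u \<in> e}" using a cd by auto
  moreover have "finite {e\<in>E. u \<in> e}" using simple_graph_finite_edges[OF simple] by simp
  ultimately show ?thesis by (metis card_mono)
qed

lemma is_cycle_append:
  assumes "walk E p" "walk E q" "distinct (p @ q)" "p \<noteq> []" "q \<noteq> []"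
    "3 \<le> length p + length q" "{last p, hd q} \<in> E" "{last q, hd p} \<in> E"
  shows "is_cycle E (p @ q)"
  using assms by (simp add: is_cycle_iff_walk walk_append)

lemma hamiltonian_join_at_matched_ends:
  assumes p: "walk E p" "distinct p" "2 \<le> length p"
    and q: "walk E q" "distinct q" "q \<noteq> []" and disjoint: "set p \<inter> set q = {}"
    and matching: "{{a1, hd q}, {last q, a2}} \<subseteq> E" "a1 \<in> set p" "a2 \<in> set p"
    and last_p: "{last p, b1} \<in> {{a1, hd q}, {last q, a2}}" "b1 \<notin> set p"
    and hd_p: "{hd p, b2} \<in> {{a1, hd q}, {last q, a2}}" "b2 \<notin> set p"
  shows "hamiltonian (set p \<union> set q) E"
proof -
  have "hd q \<notin> set p" "last q \<notin> set p" using disjoint q(3) by auto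
  moreover have "p \<noteq> []" using p(3) by auto
  then have "last p \<in> set p" "hd p \<in> set p" "last p \<noteq> hd p"
    using p distinct_hd_neq_last[of p] by auto
  ultimately consider "last p = a1" "hd p = a2" | "last p = a2" "hd p = a1"
    using last_p hd_p by (auto simp: doubleton_eq_iff)
  then obtain q' where q': "walk E q'" "distinct q'" "q' \<noteq> []" "set q' = set q"
    "length q' = length q" "{last p, hd q'} \<in> E" "{last q', hd p} \<in> E"
  proof cases
    case 1
    with q matching show thesis by (intro that[of q]) (auto simp: insert_commute)
  next
    case 2
    with q matching show thesis
      by (intro that[of "rev q"]) (auto simp: walk_rev hd_rev last_rev insert_commute)
  qed
  have "3 \<le> length p + length q'" using p(3) q'(3) by (cases q') auto
  then have "is_cycle E (p @ q')"
    using p q' disjoint by (intro is_cycle_append) auto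
  then show ?thesis unfolding hamiltonian_def using q'(4) by (metis set_append)
qed

lemma even_card_le_3_eq_2: "even (n :: nat) \<Longrightarrow> n \<le> 3 \<Longrightarrow> n \<noteq> 0 \<Longrightarrow> n = 2"
  by presburger

lemma almost_hypohamiltonian_vertex_deleted_cut:
  assumes ah: "almost_hypohamiltonian V E w" and partition: "A \<inter> B = {}" "A \<union> B = V"
    and v: "v \<in> V" "v \<noteq> w" and sides: "A - {v} \<noteq> {}" "B - {v} \<noteq> {}"
    and cut: "card (cut_edges E A B) \<le> 3"
  obtains p q where "walk E p" "walk E q" "distinct p" "distinct q" "p \<noteq> []" "q \<noteq> []"
    "set p = A - {v}" "set q = B - {v}"
    "{{last p, hd q}, {last q, hd p}} \<subseteq> cut_edges E A B"
    "card {{last p, hd q}, {last q, hd p}} = 2"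
proof -
  have "finite (cut_edges E A B)"
    using ah simple_graph_finite_edges cut_edges_subset
    by (metis almost_hypohamiltonian_def finite_subset)
  obtain vs where cycle: "is_cycle (del_vertex_E E v) vs" and vs: "set vs = V - {v}"
    using almost_hypohamiltonian_vertex_deleted[OF ah v] by blast
  have "vs \<noteq> []" using cycle by (auto simp: is_cycle_def)
  define U where "U = cycle_colour_changes (\<lambda>x. x \<in> A) vs"
  have U_cut: "U \<subseteq> cut_edges E A B"
  proof
    fix e assume e: "e \<in> U"
    then obtain a b where ab: "e = {a, b}" "a \<in> set vs" "b \<in> set vs" "a \<in> A" "b \<notin> A"
      using \<open>vs \<noteq> []\<close> unfolding U_def by (rule cycle_colour_changes_bichromatic)
    have "e \<in> E"
      using e cycle_colour_changes_subset[OF cycle] unfolding U_def del_vertex_E_def by blast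
    with ab partition vs show "e \<in> cut_edges E A B" unfolding cut_edges_def by blast
  qed
  obtain a b where "a \<in> A - {v}" "b \<in> B - {v}" using sides by blast
  then have "U \<noteq> {}"
    using partition vs unfolding U_def by (intro cycle_colour_changes_nonempty[where x = a and y = b]) auto
  moreover have "even (card U)" using cycle by (simp add: U_def even_card_cycle_colour_changes)
  moreover have "card U \<le> 3"
    using card_mono[OF \<open>finite (cut_edges E A B)\<close> U_cut] cut by linarith
  moreover have "finite U" using U_cut \<open>finite (cut_edges E A B)\<close> by (rule finite_subset)
  ultimately have "card U = 2" by (metis card_0_eq even_card_le_3_eq_2)
  with cycle obtain p q where walks: "walk (del_vertex_E E v) p" "walk (del_vertex_E E v) q"
    and pq: "distinct p" "distinct q" "p \<noteq> []" "q \<noteq> []"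
    and sets: "set p = {x\<in>set vs. x \<in> A}" "set q = {x\<in>set vs. x \<notin> A}"
    and U: "U = {{last p, hd q}, {last q, hd p}}"
    unfolding U_def by (rule cycle_split_at_two_colour_changes)
  have "del_vertex_E E v \<subseteq> E" by (auto simp: del_vertex_E_def)
  with walks have "walk E p" "walk E q" by (auto intro: walk_mono)
  moreover have "set p = A - {v}" "set q = B - {v}" using sets partition vs by auto
  ultimately show thesis using that pq U_cut \<open>card U = 2\<close> unfolding U by blast
qed

lemma Diff_singleton_nonempty_if_card_ge_2:
  assumes "2 \<le> card A"
  shows "A - {z} \<noteq> {}"
proof
  assume "A - {z} = {}"
  then have "card A \<le> card {z}" by (intro card_mono) auto
  with assms show False by simp
qed

lemma vertex_covering_cut_edges:
  assumes "finite F" "card F \<le> 1" "F \<subseteq> cut_edges E A B" "B \<noteq> {}"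
  obtains x where "x \<in> B" "\<forall>e\<in>F. x \<in> e"
proof (cases "F = {}")
  case True
  with assms(4) that show thesis by blast
next
  case False
  with assms(1,2) obtain e where "F = {e}"
    by (metis One_nat_def card_le_Suc0_iff_eq is_singletonI' is_singleton_the_elem)
  with assms(3) obtain a b where "F = {{a, b}}" "b \<in> B" by (auto simp: cut_edges_def)
  with that show thesis by blast
qed

lemma almost_hypohamiltonian_vertex_deleted_cut_within:
  assumes ah: "almost_hypohamiltonian V E w" and partition: "A \<inter> B = {}" "A \<union> B = V"
    and x: "x \<in> B" "x \<noteq> w" and sides: "A \<noteq> {}" "B - {x} \<noteq> {}"
    and cut: "card (cut_edges E A B) \<le> 3" and covering: "\<forall>e\<in>cut_edges E A B - U. x \<in> e"
  obtains p q where "walk E p" "distinct p" "set p = A" "q \<noteq> []" "set q = B - {x}"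
    "{last p, hd q} \<in> U" "{hd p, last q} \<in> U"
proof -
  have "x \<in> V" "A - {x} = A" using x(1) partition by auto
  then obtain p q where p: "walk E p" "distinct p" "p \<noteq> []" "set p = A"
    and q: "q \<noteq> []" "set q = B - {x}"
    and crossing: "{{last p, hd q}, {last q, hd p}} \<subseteq> cut_edges E A B"
    using almost_hypohamiltonian_vertex_deleted_cut[OF ah partition _ x(2) _ sides(2) cut] sides(1)
    by metis
  have ends: "hd q \<in> B - {x}" "last q \<in> B - {x}" "last p \<in> A" "hd p \<in> A"
    using p(3) q(1) by (simp_all flip: p(4) q(2))
  have "x \<notin> A" using x(1) partition(1) by blast
  have in_U: "e \<in> U" if e: "e \<in> {{last p, hd q}, {last q, hd p}}" for e
  proof (rule ccontr)
    assume "e \<notin> U"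
    moreover have "e \<in> cut_edges E A B" using crossing e by (rule subsetD)
    ultimately have "x \<in> e" using covering by simp
    moreover have "x \<noteq> last p" "x \<noteq> hd p" "x \<noteq> hd q" "x \<noteq> last q"
      using ends \<open>x \<notin> A\<close> by auto
    ultimately show False using e by auto
  qed
  have "{last p, hd q} \<in> U" "{hd p, last q} \<in> U"
    using in_U[of "{last p, hd q}"] in_U[of "{last q, hd p}"] insert_commute[of "hd p" "last q" "{}"]
    by simp_all
  with p q show thesis using that by blast
qed

lemma almost_hypohamiltonian_no_small_cut_avoiding_exceptional:
  assumes ah: "almost_hypohamiltonian V E w" and partition: "A \<inter> B = {}" "A \<union> B = V"
    and "w \<notin> B" and card_A: "2 \<le> card A" and card_B: "2 \<le> card B"
    and cut: "card (cut_edges E A B) \<le> 3"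
  shows False
proof -
  let ?X = "cut_edges E A B"
  have "finite ?X"
    using ah simple_graph_finite_edges cut_edges_subset
    by (metis almost_hypohamiltonian_def finite_subset)
  obtain y where y: "y \<in> A" "y \<noteq> w"
    using Diff_singleton_nonempty_if_card_ge_2[OF card_A] by blast
  have "B \<noteq> {}" using card_B by auto
  have "y \<in> V" "B - {y} = B" using y partition by auto
  then obtain py qy where py: "py \<noteq> []" "set py = A - {y}"
    and qy: "walk E qy" "distinct qy" "qy \<noteq> []" "set qy = B"
    and Uy: "{{last py, hd qy}, {last qy, hd py}} \<subseteq> ?X"
      "card {{last py, hd qy}, {last qy, hd py}} = 2"
    using almost_hypohamiltonian_vertex_deleted_cut[OF ah partition _ y(2) _ _ cut]
      Diff_singleton_nonempty_if_card_ge_2[OF card_A] \<open>B \<noteq> {}\<close>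
    by metis
  let ?Uy = "{{last py, hd qy}, {last qy, hd py}}"
  have "card (?X - ?Uy) \<le> 1" using card_Diff_subset[OF _ Uy(1)] Uy(2) cut by simp
  then obtain x where x: "x \<in> B" "\<forall>e\<in>?X - ?Uy. x \<in> e"
    using \<open>finite ?X\<close> \<open>B \<noteq> {}\<close> by (meson Diff_subset finite_Diff vertex_covering_cut_edges)
  have "x \<noteq> w" "A \<noteq> {}" using x(1) \<open>w \<notin> B\<close> y(1) by auto
  then obtain px qx where px: "walk E px" "distinct px" "set px = A"
    and qx: "qx \<noteq> []" "set qx = B - {x}" and matched: "{last px, hd qx} \<in> ?Uy" "{hd px, last qx} \<in> ?Uy"
    using almost_hypohamiltonian_vertex_deleted_cut_within[OF ah partition x(1) _ _ _ cut x(2)]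
      Diff_singleton_nonempty_if_card_ge_2[OF card_B]
    by metis
  \<comment> \<open>the path through A from G - x ends at the cut edges of the path through B from G - y\<close>
  have len: "2 \<le> length px" using distinct_card[OF px(2)] px(3) card_A by simp
  have disjoint: "set px \<inter> set qy = {}" using px(3) qy(4) partition(1) by simp
  have Uy_E: "?Uy \<subseteq> E" using Uy(1) cut_edges_subset by (rule subset_trans)
  have "set py \<subseteq> set px" using py(2) px(3) by blast
  then have py_ends: "last py \<in> set px" "hd py \<in> set px" using py(1) by auto
  have "hd qx \<in> set qx" "last qx \<in> set qx" using qx(1) by simp_all
  then have qx_ends: "hd qx \<notin> set px" "last qx \<notin> set px"
    using qx(2) partition(1) unfolding px(3) by blast+
  have "hamiltonian (set px \<union> set qy) E"
    by (rule hamiltonian_join_at_matched_ends[OF px(1,2) len qy(1-3) disjoint Uy_E py_ends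
          matched(1) qx_ends(1) matched(2) qx_ends(2)])
  moreover have "\<not> hamiltonian V E" using ah by (simp add: almost_hypohamiltonian_def)
  ultimately show False using px(3) qy(4) partition(2) by simp
qed

lemma almost_hypohamiltonian_no_small_cut:
  assumes ah: "almost_hypohamiltonian V E w" and "A \<subseteq> V"
    and "2 \<le> card A" "2 \<le> card (V - A)" and cut: "card (cut_edges E A (V - A)) \<le> 3"
  shows False
proof -
  have partition: "A \<inter> (V - A) = {}" "A \<union> (V - A) = V" using \<open>A \<subseteq> V\<close> by auto
  show False
  proof (cases "w \<in> A")
    case True
    then have "w \<notin> V - A" by blast
    from this assms(3,4) cut show False
      by (rule almost_hypohamiltonian_no_small_cut_avoiding_exceptional[OF ah partition])
  next
    case False
    have partition': "(V - A) \<inter> A = {}" "(V - A) \<union> A = V" using partition by auto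
    have "card (cut_edges E (V - A) A) \<le> 3" using cut by (subst cut_edges_commute)
    with False assms(4,3) show False
      by (rule almost_hypohamiltonian_no_small_cut_avoiding_exceptional[OF ah partition'])
  qed
qed

lemma almost_hypohamiltonian_cyclically_4_edge_connected:
  assumes ah: "almost_hypohamiltonian V E w"
  shows "cyclically_4_edge_connected V E"
  unfolding cyclically_4_edge_connected_def
proof (intro allI impI notI)
  fix F assume F: "F \<subseteq> E" "card F < 4"
  assume "\<exists>C1 C2. components V (E - F) = {C1, C2} \<and> C1 \<noteq> C2 \<and>
    contains_cycle C1 (E - F) \<and> contains_cycle C2 (E - F)"
  then obtain C1 C2 where C: "C1 \<in> components V (E - F)" "C2 \<in> components V (E - F)"
    "C1 \<noteq> C2" "contains_cycle C1 (E - F)" "contains_cycle C2 (E - F)"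
    by blast
  have simple: "simple_graph V E" using ah by (simp add: almost_hypohamiltonian_def)
  then have "finite V" "finite E" by (simp_all add: simple_graph_def simple_graph_finite_edges)
  have C_V: "C1 \<subseteq> V" "C2 \<subseteq> V" using C(1,2) by (simp_all add: components_subset)
  have "finite F" using F(1) \<open>finite E\<close> by (rule finite_subset)
  moreover have "cut_edges E C1 (V - C1) \<subseteq> F" using C(1) by (rule component_cut_edges_subset)
  ultimately have "card (cut_edges E C1 (V - C1)) \<le> card F" by (rule card_mono)
  with F have cut: "card (cut_edges E C1 (V - C1)) \<le> 3" by linarith
  have "C1 \<inter> C2 = {}" using C(1-3) by (rule components_disjoint)
  then have "C2 \<subseteq> V - C1" using C_V by blast
  then have "card C2 \<le> card (V - C1)" using \<open>finite V\<close> by (simp add: card_mono)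
  moreover have "3 \<le> card C1" "3 \<le> card C2"
    using C(4,5) C_V \<open>finite V\<close> by (simp_all add: card_ge_3_if_contains_cycle finite_subset)
  ultimately show False
    using almost_hypohamiltonian_no_small_cut[OF ah C_V(1) _ _ cut] by linarith
qed

lemma almost_hypohamiltonian_nontrivial_if_edge:
  assumes "almost_hypohamiltonian V E w" "e \<in> E"
  shows "V \<noteq> {w}"
  using assms by (auto simp: almost_hypohamiltonian_def simple_graph_def)

lemma small_cut_component_singleton:
  assumes ah: "almost_hypohamiltonian V E w" and M: "finite M" "card M \<le> 3"
    and K: "K \<in> components V (E - M)" and "2 \<le> card (V - K)"
  shows "card K = 1"
proof -
  have "K \<subseteq> V" "K \<noteq> {}" using K by (simp_all add: components_subset components_nonempty)
  moreover have "finite V" using ah by (simp add: almost_hypohamiltonian_def simple_graph_def)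
  ultimately have "0 < card K" by (simp add: card_gt_0_iff finite_subset)
  have "cut_edges E K (V - K) \<subseteq> M" using K by (rule component_cut_edges_subset)
  then have "card (cut_edges E K (V - K)) \<le> 3" using M card_mono order_trans by blast
  then have "\<not> 2 \<le> card K"
    using almost_hypohamiltonian_no_small_cut[OF ah \<open>K \<subseteq> V\<close>] \<open>2 \<le> card (V - K)\<close> by blast
  with \<open>0 < card K\<close> show ?thesis by linarith
qed

lemma small_cut_singleton_component_edges:
  assumes ah: "almost_hypohamiltonian V E w" and "V \<noteq> {w}" and M: "finite M" "card M \<le> 3"
    and z: "{z} \<in> components V (E - M)"
  shows "{e\<in>E. z \<in> e} = M"
proof (rule card_seteq[OF M(1)])
  have simple: "simple_graph V E" using ah by (simp add: almost_hypohamiltonian_def)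
  show "{e\<in>E. z \<in> e} \<subseteq> M"
  proof
    fix e assume e: "e \<in> {e\<in>E. z \<in> e}"
    then obtain u v where uv: "e = {u, v}" "u \<noteq> v" "u \<in> V" "v \<in> V"
      using simple by (auto simp: simple_graph_def)
    obtain b where "e = {z, b}" "b \<in> V - {z}"
    proof (cases "z = u")
      case True
      with uv show thesis by (intro that[of v]) auto
    next
      case False
      with uv e show thesis by (intro that[of u]) (auto simp: insert_commute)
    qed
    with e have "e \<in> cut_edges E {z} (V - {z})" by (auto simp: cut_edges_def)
    then show "e \<in> M" using component_cut_edges_subset[OF z] by blast
  qed
  have "z \<in> V" using components_subset[OF z] by simp
  then show "card M \<le> card {e\<in>E. z \<in> e}"
    using almost_hypohamiltonian_degree_ge_3[OF ah assms(2)] M(2) by (meson order_trans)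
qed

lemma small_cut_no_three_components:
  assumes ah: "almost_hypohamiltonian V E w" and M: "M \<subseteq> E" "M \<noteq> {}" "finite M" "card M \<le> 3"
    and K: "K1 \<in> components V (E - M)" "K2 \<in> components V (E - M)" "K3 \<in> components V (E - M)"
    and distinct: "K1 \<noteq> K2" "K1 \<noteq> K3" "K2 \<noteq> K3"
  shows False
proof -
  have "finite V" using ah by (simp add: almost_hypohamiltonian_def simple_graph_def)
  have singleton: "\<exists>z. K = {z}"
    if K: "K \<in> components V (E - M)" and K': "K' \<in> components V (E - M)"
      and K'': "K'' \<in> components V (E - M)" and "K \<noteq> K'" "K \<noteq> K''" "K' \<noteq> K''"
    for K K' K''
  proof -
    obtain a b where "a \<in> K'" "b \<in> K''"
      using K' K'' components_nonempty by (metis ex_in_conv)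
    moreover have "K \<inter> K' = {}" "K \<inter> K'' = {}" "K' \<inter> K'' = {}"
      using K K' K'' \<open>K \<noteq> K'\<close> \<open>K \<noteq> K''\<close> \<open>K' \<noteq> K''\<close> by (simp_all add: components_disjoint)
    moreover have "K' \<subseteq> V" "K'' \<subseteq> V" using K' K'' by (simp_all add: components_subset)
    ultimately have "{a, b} \<subseteq> V - K" "a \<noteq> b" by auto
    then have "2 \<le> card (V - K)"
      using \<open>finite V\<close> card_mono[of "V - K" "{a, b}"] by simp
    then have "card K = 1" using small_cut_component_singleton[OF ah M(3,4) K] by blast
    then show ?thesis by (rule card_1_singletonE) blast
  qed
  obtain z1 z2 z3 where z: "K1 = {z1}" "K2 = {z2}" "K3 = {z3}"
    using singleton K distinct by metis
  obtain e where "e \<in> M" using M(2) by blast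
  then have "V \<noteq> {w}" using M(1) almost_hypohamiltonian_nontrivial_if_edge[OF ah] by blast
  then have "{e\<in>E. z1 \<in> e} = M" "{e\<in>E. z2 \<in> e} = M" "{e\<in>E. z3 \<in> e} = M"
    using small_cut_singleton_component_edges[OF ah _ M(3,4)] K z by blast+
  with \<open>e \<in> M\<close> have "{z1, z2, z3} \<subseteq> e" by blast
  moreover have "card {z1, z2, z3} = 3" using z distinct by auto
  moreover obtain a b where "e = {a, b}"
    using \<open>e \<in> M\<close> M(1) ah unfolding almost_hypohamiltonian_def simple_graph_def by blast
  then have "card e \<le> 2" by (simp add: card_insert_if)
  ultimately show False using card_mono[of e "{z1, z2, z3}"] \<open>e = {a, b}\<close> by simp
qed

lemma small_cut_two_components:
  assumes ah: "almost_hypohamiltonian V E w" and M: "M \<subseteq> E" "M \<noteq> {}" "finite M" "card M \<le> 3"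
    and disconnected: "\<not> connected_graph V (E - M)"
  obtains K1 K2 where "components V (E - M) = {K1, K2}" "K1 \<noteq> K2"
proof -
  have "V \<noteq> {}" using ah by (auto simp: almost_hypohamiltonian_def)
  with disconnected obtain u v where uv: "u \<in> V" "v \<in> V" "\<not> reachable V (E - M) u v"
    by (auto simp: connected_graph_def)
  define K1 where "K1 = {x. reachable V (E - M) u x}"
  define K2 where "K2 = {x. reachable V (E - M) v x}"
  have K: "K1 \<in> components V (E - M)" "K2 \<in> components V (E - M)"
    using uv by (simp_all add: K1_def K2_def component_in_components)
  have "v \<in> K2" "v \<notin> K1" using uv by (simp_all add: K1_def K2_def reachable_def)
  then have "K1 \<noteq> K2" by blast
  have "K \<in> {K1, K2}" if "K \<in> components V (E - M)" for K
  proof (rule ccontr)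
    assume "K \<notin> {K1, K2}"
    then show False
      using small_cut_no_three_components[OF ah M K that \<open>K1 \<noteq> K2\<close>] by auto
  qed
  with K have "components V (E - M) = {K1, K2}" by blast
  from this \<open>K1 \<noteq> K2\<close> show thesis by (rule that)
qed

lemma almost_hypohamiltonian_three_edge_cut:
  assumes ah: "almost_hypohamiltonian V E w"
    and M: "M \<subseteq> E" "card M = 3" and disconnected: "\<not> connected_graph V (E - M)"
  shows "\<exists>A1 A2. components V (E - M) = {A1, A2} \<and> A1 \<noteq> A2 \<and> card A1 = 1 \<and> card A2 \<noteq> 1"
proof -
  have "finite M" "M \<noteq> {}" "card M \<le> 3" using M(2) by (auto intro: card_ge_0_finite)
  then obtain e where "e \<in> M" by blast
  then have "V \<noteq> {w}" using M(1) almost_hypohamiltonian_nontrivial_if_edge[OF ah] by blast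
  then have "4 \<le> card V" by (rule almost_hypohamiltonian_card_ge_4[OF ah])
  have "finite V" using ah by (simp add: almost_hypohamiltonian_def simple_graph_def)
  obtain K1 K2 where components: "components V (E - M) = {K1, K2}" and "K1 \<noteq> K2"
    using small_cut_two_components[OF ah M(1) \<open>M \<noteq> {}\<close> \<open>finite M\<close> \<open>card M \<le> 3\<close> disconnected]
    by blast
  then have K: "K1 \<in> components V (E - M)" "K2 \<in> components V (E - M)" by simp_all
  have "K1 \<union> K2 = V" using Union_components[of V "E - M"] components by simp
  moreover have "K1 \<inter> K2 = {}" using K \<open>K1 \<noteq> K2\<close> by (rule components_disjoint)
  ultimately have V: "V - K2 = K1" "card V = card K1 + card K2"
    using \<open>finite V\<close> card_Un_disjoint[of K1 K2] by (blast, metis finite_Un)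
  have "K1 \<noteq> {}" using K(1) by (rule components_nonempty)
  moreover have "finite K1" using components_subset[OF K(1)] \<open>finite V\<close> by (rule finite_subset)
  ultimately have "card K1 \<noteq> 0" by simp
  show ?thesis
  proof (cases "card K1 = 1")
    case True
    with V(2) \<open>4 \<le> card V\<close> have "card K2 \<noteq> 1" by linarith
    with True components \<open>K1 \<noteq> K2\<close> show ?thesis by (intro exI[of _ K1] exI[of _ K2]) simp
  next
    case False
    with \<open>card K1 \<noteq> 0\<close> have "2 \<le> card (V - K2)" by (simp add: V(1))
    with K(2) have "card K2 = 1"
      by (rule small_cut_component_singleton[OF ah \<open>finite M\<close> \<open>card M \<le> 3\<close>])
    moreover have "components V (E - M) = {K2, K1}" using components by blast
    ultimately show ?thesis using False \<open>K1 \<noteq> K2\<close> by (intro exI[of _ K2] exI[of _ K1]) simp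
  qed
qed

theorem lemma3p4:
  fixes V :: "'a set" and E :: "'a set set" and w :: 'a
  assumes "almost_hypohamiltonian V E w"
  shows "(\<forall>M. M \<subseteq> E \<and> card M = 3 \<and> \<not> connected_graph V (E - M) \<longrightarrow>
            (\<exists>A1 A2. components V (E - M) = {A1, A2} \<and> A1 \<noteq> A2 \<and>
                     card A1 = 1 \<and> card A2 \<noteq> 1))
         \<and> cyclically_4_edge_connected V E"
  using almost_hypohamiltonian_three_edge_cut[OF assms]
    almost_hypohamiltonian_cyclically_4_edge_connected[OF assms]
  by blast

end
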